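(* For every $E\ge0$, $$S^+(E)=\frac12\sup_{(y,m)\in D(E)}F(y,m).$$
   Context: Let $0<\rho_-<\rho_+<1$, $\varphi_\pm=\log\frac{\rho_\pm}{1-\rho_\pm}$, $s(\theta)=\theta\log\theta+(1-\theta)\log(1-\theta)$ on $[0,1]$, $\chi(\rho)=\rho(1-\rho)$. $\mathcal M$ is the set of measurable $\rho:[-1,1]\to[0,1]$, $\mathbb S(\rho)=-\frac12\int_{-1}^1 s(\rho(x))dx$, $\mathcal H(\rho,\varphi)=\frac12\int_{-1}^1[(1-\rho)\varphi-\log(1+e^\varphi)]dx$, $\Phi=\{\varphi_-\mathbf 1_{[-1,y)}+\varphi_+\mathbf 1_{[y,1]}:y\in[-1,1]\}$, $\bar V^+=\log(\min_{\rho\in[\rho_-,\rho_+]}\chi(\rho))$, $V^+(\rho)=-\mathbb S(\rho)+\inf_{\varphi\in\Phi}\mathcal H(\rho,\varphi)-\bar V^+$, and $S^+(E)=\sup\{\mathbb S(\rho):\rho\in\mathcal M,\ V^+(\rho)+\mathbb S(\rho)=E\}$ (sup of empty set $=-\infty$). Let $\xi_0=\frac{\log(1+e^{\varphi_+})-\log(1+e^{\varphi_-})}{\varphi_+-\varphi_-}\in(0,1)$, $\hat\xi_0=\frac{\log(1+e^{\varphi_+})+\log(1+e^{\varphi_-})}{\varphi_+-\varphi_-}$, and $E(m)=\frac{\varphi_+m-2\bar V^+-2E}{\varphi_+-\varphi_-}-\hat\xi_0$. Let $D(E)\subset\mathbb R^2$ be the set of $(y,m)$ with $-1\le y\le1$,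 $0\le m\le2$, $\max\{\xi_0,m-\xi_0\}\le E(m)\le m-(m-1)\xi_0$, $0\le y\xi_0+E(m)\le y+1$ and $0\le m-(y\xi_0+E(m))\le1-y$. On $D(E)$ let $F(y,m)=-(y+1)\,s\big(\frac{y\xi_0+E(m)}{y+1}\big)-(1-y)\,s\big(\frac{m-(y\xi_0+E(m))}{1-y}\big)$, where for $y=\pm1$ the indeterminate term is set equal to $0$; the supremum over the empty set is $-\infty$. *)

theory Defs
  imports "HOL-Analysis.Analysis"
begin

(* Parameters rm = rho_-, rp = rho_+ are passed explicitly. log = natural log ln. *)

definition phi_of :: "real \<Rightarrow> real" where
  "phi_of r = ln (r / (1 - r))"

definition sfun :: "real \<Rightarrow> real" where
  "sfun \<theta> = \<theta> * ln \<theta> + (1 - \<theta>) * ln (1 - \<theta>)"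

definition chi :: "real \<Rightarrow> real" where
  "chi r = r * (1 - r)"

definition Mset :: "(real \<Rightarrow> real) set" where
  "Mset = {\<rho>. \<rho> \<in> borel_measurable (lebesgue_on {-1..1}) \<and> (\<forall>x\<in>{-1..1}. 0 \<le> \<rho> x \<and> \<rho> x \<le> 1)}"

definition SS :: "(real \<Rightarrow> real) \<Rightarrow> real" where
  "SS \<rho> = - (1/2) * integral\<^sup>L (lebesgue_on {-1..1}) (\<lambda>x. sfun (\<rho> x))"

definition HH :: "(real \<Rightarrow> real) \<Rightarrow> (real \<Rightarrow> real) \<Rightarrow> real" where
  "HH \<rho> \<phi> = (1/2) * integral\<^sup>L (lebesgue_on {-1..1})
      (\<lambda>x. (1 - \<rho> x) * \<phi> x - ln (1 + exp (\<phi> x)))"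

definition step_phi :: "real \<Rightarrow> real \<Rightarrow> real \<Rightarrow> real \<Rightarrow> real" where
  "step_phi rm rp y x = (if x < y then phi_of rm else phi_of rp)"

definition PhiSet :: "real \<Rightarrow> real \<Rightarrow> (real \<Rightarrow> real) set" where
  "PhiSet rm rp = {step_phi rm rp y | y. y \<in> {-1..1}}"

definition Vbar :: "real \<Rightarrow> real \<Rightarrow> real" where
  "Vbar rm rp = ln (INF r\<in>{rm..rp}. chi r)"

definition Vplus :: "real \<Rightarrow> real \<Rightarrow> (real \<Rightarrow> real) \<Rightarrow> real" where
  "Vplus rm rp \<rho> = - SS \<rho> + (INF \<phi>\<in>PhiSet rm rp. HH \<rho> \<phi>) - Vbar rm rp"

definition Splus :: "real \<Rightarrow> real \<Rightarrow> real \<Rightarrow> ereal" where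
  "Splus rm rp E = Sup (ereal ` {SS \<rho> | \<rho>. \<rho> \<in> Mset \<and> Vplus rm rp \<rho> + SS \<rho> = E})"

definition xi0 :: "real \<Rightarrow> real \<Rightarrow> real" where
  "xi0 rm rp = (ln (1 + exp (phi_of rp)) - ln (1 + exp (phi_of rm))) / (phi_of rp - phi_of rm)"

definition xihat0 :: "real \<Rightarrow> real \<Rightarrow> real" where
  "xihat0 rm rp = (ln (1 + exp (phi_of rp)) + ln (1 + exp (phi_of rm))) / (phi_of rp - phi_of rm)"

definition Em :: "real \<Rightarrow> real \<Rightarrow> real \<Rightarrow> real \<Rightarrow> real" where
  "Em rm rp E m = (phi_of rp * m - 2 * Vbar rm rp - 2 * E) / (phi_of rp - phi_of rm) - xihat0 rm rp"

definition Dset :: "real \<Rightarrow> real \<Rightarrow> real \<Rightarrow> (real \<times> real) set" where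
  "Dset rm rp E = {(y, m). -1 \<le> y \<and> y \<le> 1 \<and> 0 \<le> m \<and> m \<le> 2 \<and>
      max (xi0 rm rp) (m - xi0 rm rp) \<le> Em rm rp E m \<and>
      Em rm rp E m \<le> m - (m - 1) * xi0 rm rp \<and>
      0 \<le> y * xi0 rm rp + Em rm rp E m \<and> y * xi0 rm rp + Em rm rp E m \<le> y + 1 \<and>
      0 \<le> m - (y * xi0 rm rp + Em rm rp E m) \<and> m - (y * xi0 rm rp + Em rm rp E m) \<le> 1 - y}"

text \<open>F(y,m); for y = -1 (resp. y = 1) the indeterminate first (resp. second) term is 0.\<close>
definition Ffun :: "real \<Rightarrow> real \<Rightarrow> real \<Rightarrow> real \<Rightarrow> real \<Rightarrow> real" where
  "Ffun rm rp E y m =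
     (let a = y * xi0 rm rp + Em rm rp E m in
      (if y = -1 then 0 else - (y + 1) * sfun (a / (y + 1))) +
      (if y = 1 then 0 else - (1 - y) * sfun ((m - a) / (1 - y))))"

end

theory Submission
  imports Defs
begin

text \<open>
  Write \<open>B(y)\<close> for the integral of \<open>1 - \<rho>\<close> over \<open>[-1, y]\<close>. Along the step
  profiles \<open>\<H>(\<rho>, \<cdot>)\<close> is affine in \<open>B(y)\<close>, and the constraint
  \<open>V\<^sup>+(\<rho>) + \<bbbS>(\<rho>) = E\<close> says exactly that \<open>B\<close> lies below the line
  \<open>l(y) = y \<xi>\<^sub>0 + E(B(1))\<close> and touches it at some \<open>y\<^sub>0\<close>. Jensen's inequality
  for the convex function \<open>s\<close> on \<open>[-1, y\<^sub>0]\<close> and \<open>[y\<^sub>0, 1]\<close> bounds the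
  entropy of such a \<open>\<rho>\<close> by \<open>F(y\<^sub>0, B(1))/2\<close>, and \<open>(y\<^sub>0, B(1)) \<in> D(E)\<close>.
  Conversely, for \<open>(y, m) \<in> D(E)\<close> the profile that is constant on each side of \<open>y\<close>,
  with \<open>B(y) = l(y)\<close> and \<open>B(1) = m\<close>, satisfies the constraint and has entropy
  exactly \<open>F(y, m)/2\<close>.
\<close>

lemma sfun_one_minus: "sfun (1 - t) = sfun t"
  unfolding sfun_def by simp

lemma mult_ln_le_tangent:
  fixes t c :: real
  assumes "0 \<le> t" "0 < c"
  shows "t * ln c \<le> t * ln t + (c - t)"
proof (cases "t = 0")
  case True
  then show ?thesis using assms by simp
next
  case False
  then have t: "0 < t" using assms by simp
  have "ln c - ln t \<le> c / t - 1"
    using ln_le_minus_one[of "c / t"] ln_div[of c t] t assms by simp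
  then have "t * (ln c - ln t) \<le> t * (c / t - 1)"
    using t by (simp add: mult_left_mono)
  then show ?thesis using t by (simp add: algebra_simps)
qed

lemma sfun_ge_tangent:
  fixes t c :: real
  assumes "0 \<le> t" "t \<le> 1" "0 < c" "c < 1"
  shows "t * ln c + (1 - t) * ln (1 - c) \<le> sfun t"
  using mult_ln_le_tangent[of t c] mult_ln_le_tangent[of "1 - t" "1 - c"] assms
  unfolding sfun_def by simp

lemma sfun_abs_le_1:
  assumes "0 \<le> t" "t \<le> 1"
  shows "\<bar>sfun t\<bar> \<le> 1"
proof -
  have "- ln 2 \<le> sfun t"
    using sfun_ge_tangent[of t "1/2"] assms by (simp add: algebra_simps ln_div)
  moreover have "ln 2 \<le> (1::real)"
    using ln_le_minus_one[of 2] by simp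
  moreover have "t * ln t \<le> 0"
    using assms by (cases "t = 0") (auto intro!: mult_nonneg_nonpos)
  moreover have "(1 - t) * ln (1 - t) \<le> 0"
    using assms by (cases "t = 1") (auto intro!: mult_nonneg_nonpos)
  ultimately show ?thesis unfolding sfun_def by auto
qed

lemma sfun_borel [measurable]: "sfun \<in> borel_measurable borel"
  unfolding sfun_def by measurable

lemma nonneg_if_ln_one_minus_le:
  fixes L X :: real
  assumes L: "0 < L" and bound: "\<And>c. 0 < c \<Longrightarrow> c < 1 \<Longrightarrow> L * ln (1 - c) \<le> X"
  shows "0 \<le> X"
proof (rule ccontr)
  assume "\<not> 0 \<le> X"
  define c where "c = 1 - exp (X / (2 * L))"
  have "0 < c" "c < 1"
    using \<open>\<not> 0 \<le> X\<close> L by (auto simp: c_def divide_neg_pos)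
  then have "L * ln (1 - c) \<le> X" by (rule bound)
  moreover have "L * ln (1 - c) = X / 2" using L by (simp add: c_def)
  ultimately show False using \<open>\<not> 0 \<le> X\<close> by simp
qed

lemma integral_sfun_ge_tangent:
  fixes h :: "real \<Rightarrow> real"
  assumes h_int: "h integrable_on {a..b}" and sh_int: "(\<lambda>x. sfun (h x)) integrable_on {a..b}"
    and h01: "\<And>x. x \<in> {a..b} \<Longrightarrow> 0 \<le> h x \<and> h x \<le> 1" and "a \<le> b"
    and c: "0 < c" "c < 1"
  shows "integral {a..b} h * ln c + ((b - a) - integral {a..b} h) * ln (1 - c)
    \<le> integral {a..b} (\<lambda>x. sfun (h x))"
proof -
  let ?g = "\<lambda>x. h x * (ln c - ln (1 - c)) + ln (1 - c)"
  have "integral {a..b} ?g = integral {a..b} h * (ln c - ln (1 - c)) + (b - a) * ln (1 - c)"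
    using h_int \<open>a \<le> b\<close> by (subst integral_add) (auto intro: integrable_on_mult_left)
  moreover have "integral {a..b} ?g \<le> integral {a..b} (\<lambda>x. sfun (h x))"
  proof (rule integral_le[OF _ sh_int])
    show "?g integrable_on {a..b}"
      using h_int by (intro integrable_add integrable_on_mult_left) auto
    show "?g x \<le> sfun (h x)" if "x \<in> {a..b}" for x
      using sfun_ge_tangent[OF _ _ c, of "h x"] h01[OF that] by (simp add: algebra_simps)
  qed
  ultimately show ?thesis by (simp add: algebra_simps)
qed

text \<open>When the mean of \<open>h\<close> is \<open>0\<close> or \<open>1\<close>, the tangent point \<open>c\<close> is sent to the
  boundary.\<close>
lemma sfun_mean_le_integral:
  fixes h :: "real \<Rightarrow> real"
  assumes h_int: "h integrable_on {a..b}" and sh_int: "(\<lambda>x. sfun (h x)) integrable_on {a..b}"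
    and h01: "\<And>x. x \<in> {a..b} \<Longrightarrow> 0 \<le> h x \<and> h x \<le> 1" and "a \<le> b"
  shows "(b - a) * sfun (integral {a..b} h / (b - a)) \<le> integral {a..b} (\<lambda>x. sfun (h x))"
proof (cases "a = b")
  case True
  then show ?thesis by simp
next
  case False
  define L where "L = b - a"
  define I where "I = integral {a..b} h"
  define S where "S = integral {a..b} (\<lambda>x. sfun (h x))"
  have L: "0 < L" using \<open>a \<le> b\<close> False by (simp add: L_def)
  have I0: "0 \<le> I" unfolding I_def
    by (rule integral_nonneg[OF h_int]) (use h01 in auto)
  have "I \<le> integral {a..b} (\<lambda>x. 1::real)" unfolding I_def
    by (rule integral_le[OF h_int]) (use h01 in auto)
  then have IL: "I \<le> L" using \<open>a \<le> b\<close> by (simp add: L_def)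
  have tangent: "I * ln c + (L - I) * ln (1 - c) \<le> S" if "0 < c" "c < 1" for c
    using integral_sfun_ge_tangent[OF assms that] by (simp add: I_def L_def S_def)
  consider "I = 0" | "I = L" | "0 < I / L" "I / L < 1"
    using I0 IL L by (cases "I = 0 \<or> I = L") auto
  then have "L * sfun (I / L) \<le> S"
  proof cases
    case 1
    then have "0 \<le> S"
      using tangent by (intro nonneg_if_ln_one_minus_le[OF L]) auto
    then show ?thesis using 1 by (simp add: sfun_def)
  next
    case 2
    then have "0 \<le> S"
      using tangent[of "1 - c" for c] by (intro nonneg_if_ln_one_minus_le[OF L]) auto
    then show ?thesis using 2 L by (simp add: sfun_def)
  next
    case 3
    have "L * sfun (I / L) = I * ln (I / L) + (L - I) * ln (1 - I / L)"
      using L by (simp add: sfun_def field_simps)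
    then show ?thesis using tangent[OF 3] by simp
  qed
  then show ?thesis by (simp add: L_def I_def S_def)
qed

lemma bounded_measurable_integral_eq:
  fixes G :: "real \<Rightarrow> real"
  assumes "G \<in> borel_measurable (lebesgue_on {a..b})" "\<And>x. x \<in> {a..b} \<Longrightarrow> \<bar>G x\<bar> \<le> K"
  shows "G integrable_on {a..b}"
    and "integral\<^sup>L (lebesgue_on {a..b}) G = integral {a..b} G"
proof -
  have G: "G absolutely_integrable_on {a..b}"
    by (rule measurable_bounded_by_integrable_imp_absolutely_integrable[where g="\<lambda>_. K"])
       (use assms in auto)
  then show "G integrable_on {a..b}"
    using set_lebesgue_integral_eq_integral(1) by blast
  show "integral\<^sup>L (lebesgue_on {a..b}) G = integral {a..b} G"
    using G by (simp add: absolutely_integrable_imp_integrable lebesgue_integral_eq_integral)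
qed

lemma borel_measurable_lebesgue_on:
  "(f :: real \<Rightarrow> real) \<in> borel_measurable borel \<Longrightarrow> f \<in> borel_measurable (lebesgue_on S)"
  by (simp add: measurable_completion measurable_restrict_space1)

lemma Mset_integrals:
  assumes "\<rho> \<in> Mset"
  shows "(\<lambda>x. 1 - \<rho> x) integrable_on {-1..1}"
    and "(\<lambda>x. sfun (1 - \<rho> x)) integrable_on {-1..1}"
    and "SS \<rho> = - (1/2) * integral {-1..1} (\<lambda>x. sfun (1 - \<rho> x))"
proof -
  have m: "\<rho> \<in> borel_measurable (lebesgue_on {-1..1})"
    and b: "\<And>x. x \<in> {-1..1} \<Longrightarrow> 0 \<le> \<rho> x \<and> \<rho> x \<le> 1"
    using assms by (auto simp: Mset_def)
  have sfun_flip: "(\<lambda>x. sfun (1 - \<rho> x)) = (\<lambda>x. sfun (\<rho> x))"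
    by (metis sfun_one_minus diff_diff_cancel)
  have "(\<lambda>x. 1 - \<rho> x) \<in> borel_measurable (lebesgue_on {-1..1})"
    using m by measurable
  then show "(\<lambda>x. 1 - \<rho> x) integrable_on {-1..1}"
    by (rule bounded_measurable_integral_eq(1)[where K=1]) (use b in auto)
  have ms: "(\<lambda>x. sfun (\<rho> x)) \<in> borel_measurable (lebesgue_on {-1..1})"
    using m by measurable
  note sfun_int = bounded_measurable_integral_eq[OF ms, where K=1]
  show "(\<lambda>x. sfun (1 - \<rho> x)) integrable_on {-1..1}"
    unfolding sfun_flip by (rule sfun_int(1)) (use b sfun_abs_le_1 in auto)
  show "SS \<rho> = - (1/2) * integral {-1..1} (\<lambda>x. sfun (1 - \<rho> x))"
    unfolding SS_def sfun_flip by (subst sfun_int(2)) (use b sfun_abs_le_1 in auto)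
qed

lemma Mset_vacancy_bounds:
  "\<rho> \<in> Mset \<Longrightarrow> x \<in> {-1..1} \<Longrightarrow> 0 \<le> 1 - \<rho> x \<and> 1 - \<rho> x \<le> 1"
  by (auto simp: Mset_def)

subsection \<open>The cumulative vacancy \<open>B\<close>\<close>

definition cumulative :: "(real \<Rightarrow> real) \<Rightarrow> real \<Rightarrow> real" where
  "cumulative \<rho> y = integral {-1..y} (\<lambda>x. 1 - \<rho> x)"

lemma cumulative_minus_one [simp]: "cumulative \<rho> (-1) = 0"
  by (simp add: cumulative_def)

lemma continuous_on_cumulative: "\<rho> \<in> Mset \<Longrightarrow> continuous_on {-1..1} (cumulative \<rho>)"
  unfolding cumulative_def[abs_def]
  by (rule indefinite_integral_continuous_1[OF Mset_integrals(1)])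

lemma cumulative_split:
  assumes "\<rho> \<in> Mset" "-1 \<le> y" "y \<le> 1"
  shows "(\<lambda>x. 1 - \<rho> x) integrable_on {-1..y}"
    and "(\<lambda>x. 1 - \<rho> x) integrable_on {y..1}"
    and "integral {y..1} (\<lambda>x. 1 - \<rho> x) = cumulative \<rho> 1 - cumulative \<rho> y"
  using assms integrable_subinterval_real[OF Mset_integrals(1)[OF assms(1)]]
    Henstock_Kurzweil_Integration.integral_combine[OF assms(2,3) Mset_integrals(1)[OF assms(1)]]
  by (auto simp: cumulative_def)

lemma cumulative_bounds:
  assumes "\<rho> \<in> Mset" "-1 \<le> y" "y \<le> 1"
  shows "0 \<le> cumulative \<rho> y" "cumulative \<rho> y \<le> y + 1"
    and "0 \<le> cumulative \<rho> 1 - cumulative \<rho> y" "cumulative \<rho> 1 - cumulative \<rho> y \<le> 1 - y"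
proof -
  note split = cumulative_split[OF assms]
  note vb = Mset_vacancy_bounds[OF assms(1)]
  show "0 \<le> cumulative \<rho> y" unfolding cumulative_def
    by (rule integral_nonneg[OF split(1)]) (use vb assms in auto)
  have "cumulative \<rho> y \<le> integral {-1..y} (\<lambda>x. 1::real)" unfolding cumulative_def
    by (rule integral_le[OF split(1)]) (use vb assms in auto)
  then show "cumulative \<rho> y \<le> y + 1" using assms by simp
  have "0 \<le> integral {y..1} (\<lambda>x. 1 - \<rho> x)"
    by (rule integral_nonneg[OF split(2)]) (use vb assms in auto)
  then show "0 \<le> cumulative \<rho> 1 - cumulative \<rho> y" using split(3) by simp
  have "integral {y..1} (\<lambda>x. 1 - \<rho> x) \<le> integral {y..1} (\<lambda>x. 1::real)"
    by (rule integral_le[OF split(2)]) (use vb assms in auto)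
  then show "cumulative \<rho> 1 - cumulative \<rho> y \<le> 1 - y" using split(3) assms by simp
qed

lemma SS_le_split_entropy:
  assumes "\<rho> \<in> Mset" "-1 \<le> y" "y \<le> 1"
  shows "SS \<rho> \<le> - (1/2) * ((y + 1) * sfun (cumulative \<rho> y / (y + 1))
                 + (1 - y) * sfun ((cumulative \<rho> 1 - cumulative \<rho> y) / (1 - y)))"
proof -
  note sint = Mset_integrals(2)[OF assms(1)]
  note split = cumulative_split[OF assms]
  note vb = Mset_vacancy_bounds[OF assms(1)]
  have s1: "(\<lambda>x. sfun (1 - \<rho> x)) integrable_on {-1..y}"
    and s2: "(\<lambda>x. sfun (1 - \<rho> x)) integrable_on {y..1}"
    using integrable_subinterval_real[OF sint] assms by auto
  have "(y - -1) * sfun (integral {-1..y} (\<lambda>x. 1 - \<rho> x) / (y - -1))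
        \<le> integral {-1..y} (\<lambda>x. sfun (1 - \<rho> x))"
    by (rule sfun_mean_le_integral[OF split(1) s1]) (use vb assms in auto)
  moreover have "(1 - y) * sfun (integral {y..1} (\<lambda>x. 1 - \<rho> x) / (1 - y))
        \<le> integral {y..1} (\<lambda>x. sfun (1 - \<rho> x))"
    by (rule sfun_mean_le_integral[OF split(2) s2]) (use vb assms in auto)
  ultimately
  have left: "(y + 1) * sfun (cumulative \<rho> y / (y + 1))
        \<le> integral {-1..y} (\<lambda>x. sfun (1 - \<rho> x))"
    and right: "(1 - y) * sfun ((cumulative \<rho> 1 - cumulative \<rho> y) / (1 - y))
        \<le> integral {y..1} (\<lambda>x. sfun (1 - \<rho> x))"
    using split(3) by (simp_all add: cumulative_def)
  show ?thesis
    using Henstock_Kurzweil_Integration.integral_combine[OF assms(2,3) sint]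
      Mset_integrals(3)[OF assms(1)] left right by simp
qed

subsection \<open>\<open>\<H>\<close> along the step profiles\<close>

definition HH_step :: "real \<Rightarrow> real \<Rightarrow> (real \<Rightarrow> real) \<Rightarrow> real \<Rightarrow> real" where
  "HH_step rm rp \<rho> y = 1/2 * (phi_of rm * cumulative \<rho> y
      + phi_of rp * (cumulative \<rho> 1 - cumulative \<rho> y)
      - ln (1 + exp (phi_of rm)) * (y + 1) - ln (1 + exp (phi_of rp)) * (1 - y))"

lemma continuous_on_HH_step: "\<rho> \<in> Mset \<Longrightarrow> continuous_on {-1..1} (HH_step rm rp \<rho>)"
  unfolding HH_step_def[abs_def] using continuous_on_cumulative
  by (intro continuous_intros) auto

lemma integral_affine_vacancy:
  fixes \<rho> :: "real \<Rightarrow> real"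
  assumes "(\<lambda>x. 1 - \<rho> x) integrable_on {a..b}" "a \<le> b"
  shows "integral {a..b} (\<lambda>x. (1 - \<rho> x) * c - d) = c * integral {a..b} (\<lambda>x. 1 - \<rho> x) - d * (b - a)"
proof -
  have "integral {a..b} (\<lambda>x. (1 - \<rho> x) * c - d)
      = integral {a..b} (\<lambda>x. (1 - \<rho> x) * c) - integral {a..b} (\<lambda>x. d)"
    using integrable_on_mult_left[OF assms(1)] by (rule integral_diff) auto
  then show ?thesis using assms by simp
qed

lemma HH_eq_integral:
  fixes \<phi> :: "real \<Rightarrow> real"
  assumes \<rho>: "\<rho> \<in> Mset" and \<phi>_meas: "\<phi> \<in> borel_measurable (lebesgue_on {-1..1})"
    and \<phi>_bound: "\<And>x. x \<in> {-1..1} \<Longrightarrow> \<bar>\<phi> x\<bar> \<le> C"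
  defines "K \<equiv> \<lambda>x. (1 - \<rho> x) * \<phi> x - ln (1 + exp (\<phi> x))"
  shows "K integrable_on {-1..1}" and "HH \<rho> \<phi> = 1/2 * integral {-1..1} K"
proof -
  have "(\<lambda>t::real. ln (1 + exp t)) \<in> borel_measurable borel" by measurable
  from measurable_compose[OF \<phi>_meas this]
  have "(\<lambda>x. ln (1 + exp (\<phi> x))) \<in> borel_measurable (lebesgue_on {-1..1})"
    by simp
  moreover have "\<rho> \<in> borel_measurable (lebesgue_on {-1..1})"
    using \<rho> by (simp add: Mset_def)
  ultimately have K_meas: "K \<in> borel_measurable (lebesgue_on {-1..1})"
    using \<phi>_meas unfolding K_def by measurable
  have K_bound: "\<bar>K x\<bar> \<le> C + ln (1 + exp C)" if "x \<in> {-1..1}" for x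
  proof -
    have "\<bar>(1 - \<rho> x) * \<phi> x\<bar> \<le> C"
      using Mset_vacancy_bounds[OF \<rho> that] \<phi>_bound[OF that]
      by (simp add: abs_mult mult_le_one order_trans[OF mult_left_le_one_le])
    moreover have "ln (1 + exp (\<phi> x)) \<le> ln (1 + exp C)"
      using \<phi>_bound[OF that] by (simp add: abs_le_iff add_pos_pos)
    moreover have "0 \<le> ln (1 + exp (\<phi> x))" by simp
    ultimately show ?thesis unfolding K_def abs_le_iff by (intro conjI) linarith+
  qed
  show "K integrable_on {-1..1}" and "HH \<rho> \<phi> = 1/2 * integral {-1..1} K"
    using bounded_measurable_integral_eq[OF K_meas K_bound] by (simp_all add: HH_def K_def)
qed

lemma HH_step_phi:
  assumes "\<rho> \<in> Mset" "-1 \<le> y" "y \<le> 1"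
  shows "HH \<rho> (step_phi rm rp y) = HH_step rm rp \<rho> y"
proof -
  define a where "a = phi_of rm"
  define b where "b = phi_of rp"
  define K where "K = (\<lambda>x. (1 - \<rho> x) * step_phi rm rp y x - ln (1 + exp (step_phi rm rp y x)))"
  have "(\<lambda>x::real. if x < y then a else b) \<in> borel_measurable borel" by measurable
  then have step_meas: "step_phi rm rp y \<in> borel_measurable (lebesgue_on {-1..1})"
    unfolding step_phi_def[abs_def] a_def b_def by (rule borel_measurable_lebesgue_on)
  have "\<bar>step_phi rm rp y x\<bar> \<le> \<bar>a\<bar> + \<bar>b\<bar>" for x
    by (simp add: step_phi_def a_def b_def)
  note K_int = HH_eq_integral[OF assms(1) step_meas this, folded K_def]
  note split = cumulative_split[OF assms]
  have "integral {-1..y} K = integral {-1..y} (\<lambda>x. (1 - \<rho> x) * a - ln (1 + exp a))"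
    by (rule integral_spike[where S="{y}"]) (auto simp: K_def step_phi_def a_def)
  also have "\<dots> = a * cumulative \<rho> y - ln (1 + exp a) * (y + 1)"
    using integral_affine_vacancy[OF split(1)] assms by (simp add: cumulative_def)
  finally have left: "integral {-1..y} K = a * cumulative \<rho> y - ln (1 + exp a) * (y + 1)" .
  have "integral {y..1} K = integral {y..1} (\<lambda>x. (1 - \<rho> x) * b - ln (1 + exp b))"
    by (rule integral_cong) (auto simp: K_def step_phi_def b_def)
  also have "\<dots> = b * (cumulative \<rho> 1 - cumulative \<rho> y) - ln (1 + exp b) * (1 - y)"
    using integral_affine_vacancy[OF split(2)] assms split(3) by simp
  finally have right:
    "integral {y..1} K = b * (cumulative \<rho> 1 - cumulative \<rho> y) - ln (1 + exp b) * (1 - y)" .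
  have "HH \<rho> (step_phi rm rp y) = 1/2 * integral {-1..1} K"
    by (rule K_int(2))
  also have "integral {-1..1} K = integral {-1..y} K + integral {y..1} K"
    using Henstock_Kurzweil_Integration.integral_combine[OF assms(2,3) K_int(1)] by simp
  finally show ?thesis
    unfolding left right HH_step_def a_def b_def by (simp add: algebra_simps)
qed

lemma INF_HH_PhiSet:
  assumes "\<rho> \<in> Mset"
  shows "(INF \<phi>\<in>PhiSet rm rp. HH \<rho> \<phi>) = Inf (HH_step rm rp \<rho> ` {-1..1})"
proof -
  have "PhiSet rm rp = step_phi rm rp ` {-1..1}"
    by (auto simp: PhiSet_def)
  then have "HH \<rho> ` PhiSet rm rp = HH_step rm rp \<rho> ` {-1..1}"
    using HH_step_phi[OF assms] by (auto simp: image_image intro!: image_cong)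
  then show ?thesis by simp
qed

subsection \<open>The constraint as a contact condition\<close>

lemma ln_one_plus_exp_phi_of:
  assumes "0 < r" "r < 1"
  shows "ln (1 + exp (phi_of r)) = - ln (1 - r)"
proof -
  have "1 + exp (phi_of r) = 1 / (1 - r)"
    using assms by (simp add: phi_of_def field_simps)
  then show ?thesis using assms by (simp add: ln_div)
qed

lemma phi_of_xi0_bounds:
  assumes "0 < rm" "rm < rp" "rp < 1"
  shows "phi_of rm < phi_of rp" "0 < xi0 rm rp" "xi0 rm rp < 1"
proof -
  have ln_r: "ln rm < ln rp" and ln_1r: "ln (1 - rp) < ln (1 - rm)"
    using assms by simp_all
  have phi_diff: "phi_of rp - phi_of rm = (ln rp - ln rm) + (ln (1 - rm) - ln (1 - rp))"
    using assms by (simp add: phi_of_def ln_div)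
  then show "phi_of rm < phi_of rp" using ln_r ln_1r by simp
  have "xi0 rm rp = (ln (1 - rm) - ln (1 - rp)) / ((ln rp - ln rm) + (ln (1 - rm) - ln (1 - rp)))"
    unfolding xi0_def phi_diff using assms by (simp add: ln_one_plus_exp_phi_of)
  then show "0 < xi0 rm rp" "xi0 rm rp < 1" using ln_r ln_1r by simp_all
qed

definition contact_line :: "real \<Rightarrow> real \<Rightarrow> real \<Rightarrow> real \<Rightarrow> real \<Rightarrow> real" where
  "contact_line rm rp E m y = y * xi0 rm rp + Em rm rp E m"

text \<open>\<open>\<xi>\<^sub>0\<close>, \<open>\<hat>\<xi>\<^sub>0\<close> and \<open>E(m)\<close> are exactly the coefficients that make
  this identity hold.\<close>
lemma HH_step_minus_level:
  assumes "phi_of rm \<noteq> phi_of rp"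
  shows "2 * HH_step rm rp \<rho> y - 2 * (E + Vbar rm rp)
    = (phi_of rp - phi_of rm) * (contact_line rm rp E (cumulative \<rho> 1) y - cumulative \<rho> y)"
proof -
  define D where "D = phi_of rp - phi_of rm"
  have "D \<noteq> 0" using assms by (simp add: D_def)
  have xi: "D * xi0 rm rp = ln (1 + exp (phi_of rp)) - ln (1 + exp (phi_of rm))"
    using \<open>D \<noteq> 0\<close> unfolding xi0_def D_def by simp
  have xihat: "D * xihat0 rm rp = ln (1 + exp (phi_of rp)) + ln (1 + exp (phi_of rm))"
    using \<open>D \<noteq> 0\<close> unfolding xihat0_def D_def by simp
  have Em: "D * Em rm rp E m = phi_of rp * m - 2 * Vbar rm rp - 2 * E - D * xihat0 rm rp" for m
    using \<open>D \<noteq> 0\<close> unfolding Em_def D_def[symmetric] by (simp add: field_simps)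
  have "D * (contact_line rm rp E (cumulative \<rho> 1) y - cumulative \<rho> y)
      = y * (D * xi0 rm rp) + D * Em rm rp E (cumulative \<rho> 1) - D * cumulative \<rho> y"
    unfolding contact_line_def by (simp add: algebra_simps)
  also have "\<dots> = 2 * HH_step rm rp \<rho> y - 2 * (E + Vbar rm rp)"
    unfolding xi Em xihat HH_step_def by (simp add: D_def algebra_simps)
  finally show ?thesis by (simp add: D_def)
qed

lemma Vplus_add_SS_eq_iff_contact:
  fixes E :: real
  assumes params: "0 < rm" "rm < rp" "rp < 1" and \<rho>: "\<rho> \<in> Mset"
  defines "l \<equiv> contact_line rm rp E (cumulative \<rho> 1)"
  shows "Vplus rm rp \<rho> + SS \<rho> = E \<longleftrightarrow>
    (\<forall>y\<in>{-1..1}. cumulative \<rho> y \<le> l y) \<and> (\<exists>y\<in>{-1..1}. cumulative \<rho> y = l y)"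
proof -
  let ?G = "HH_step rm rp \<rho>" and ?c = "E + Vbar rm rp"
  have D: "0 < phi_of rp - phi_of rm"
    using phi_of_xi0_bounds[OF params] by simp
  have level: "2 * ?G y - 2 * ?c = (phi_of rp - phi_of rm) * (l y - cumulative \<rho> y)" for y
    unfolding l_def using HH_step_minus_level D by simp
  have below_iff: "?c \<le> ?G y \<longleftrightarrow> cumulative \<rho> y \<le> l y" for y
  proof -
    have "?c \<le> ?G y \<longleftrightarrow> 0 \<le> 2 * ?G y - 2 * ?c" by auto
    also have "\<dots> \<longleftrightarrow> 0 \<le> (phi_of rp - phi_of rm) * (l y - cumulative \<rho> y)"
      by (simp only: level)
    finally show ?thesis using D by (simp add: zero_le_mult_iff)
  qed
  have on_iff: "?G y = ?c \<longleftrightarrow> cumulative \<rho> y = l y" for y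
  proof -
    have "?G y = ?c \<longleftrightarrow> 2 * ?G y - 2 * ?c = 0" by auto
    also have "\<dots> \<longleftrightarrow> (phi_of rp - phi_of rm) * (l y - cumulative \<rho> y) = 0"
      by (simp only: level)
    finally show ?thesis using D by auto
  qed
  obtain y0 where y0: "y0 \<in> {-1..1}" "\<And>y. y \<in> {-1..1} \<Longrightarrow> ?G y0 \<le> ?G y"
    using continuous_attains_inf[OF compact_Icc _ continuous_on_HH_step[OF \<rho>, of rm rp]] by auto
  have Inf_G: "Inf (?G ` {-1..1}) = ?G y0"
    by (rule cInf_eq_minimum) (use y0 in auto)
  have "Vplus rm rp \<rho> + SS \<rho> = E \<longleftrightarrow> ?G y0 = ?c"
    unfolding Vplus_def INF_HH_PhiSet[OF \<rho>] Inf_G by auto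
  also have "\<dots> \<longleftrightarrow> (\<forall>y\<in>{-1..1}. ?c \<le> ?G y) \<and> (\<exists>y\<in>{-1..1}. ?G y = ?c)"
    using y0 by force
  finally show ?thesis using below_iff on_iff by simp
qed

subsection \<open>Upper bound\<close>

lemma Ffun_eq: "Ffun rm rp E y m =
    - (y + 1) * sfun (contact_line rm rp E m y / (y + 1))
    - (1 - y) * sfun ((m - contact_line rm rp E m y) / (1 - y))"
  unfolding Ffun_def contact_line_def Let_def by (auto simp: algebra_simps)

lemma SS_le_Ffun_Dset:
  assumes params: "0 < rm" "rm < rp" "rp < 1"
    and \<rho>: "\<rho> \<in> Mset" and constraint: "Vplus rm rp \<rho> + SS \<rho> = E"
  shows "\<exists>p\<in>Dset rm rp E. SS \<rho> \<le> 1/2 * Ffun rm rp E (fst p) (snd p)"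
proof -
  define m where "m = cumulative \<rho> 1"
  define l where "l = contact_line rm rp E m"
  have below: "\<And>y. y \<in> {-1..1} \<Longrightarrow> cumulative \<rho> y \<le> l y"
    and "\<exists>y\<in>{-1..1}. cumulative \<rho> y = l y"
    using constraint Vplus_add_SS_eq_iff_contact[OF params \<rho>] by (simp_all add: l_def m_def)
  then obtain y0 where y0: "-1 \<le> y0" "y0 \<le> 1" and touch: "cumulative \<rho> y0 = l y0"
    by auto
  note B0 = cumulative_bounds[OF \<rho> y0] and B1 = cumulative_bounds[OF \<rho>, of 1, simplified]
  have at_ends: "xi0 rm rp \<le> Em rm rp E m" "m - xi0 rm rp \<le> Em rm rp E m"
    using below[of "-1"] below[of 1] by (simp_all add: l_def contact_line_def m_def)
  have "l y0 \<le> m + xi0 rm rp * (y0 - m + 1)"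
  proof (cases "y0 \<le> m - 1")
    case True
    then have "0 \<le> (1 - xi0 rm rp) * (m - 1 - y0)"
      using phi_of_xi0_bounds[OF params] by simp
    then show ?thesis using B0(2) touch by (simp add: algebra_simps)
  next
    case False
    then have "0 \<le> xi0 rm rp * (y0 - m + 1)"
      using phi_of_xi0_bounds[OF params] by simp
    then show ?thesis using B0(3) touch by (simp add: m_def)
  qed
  then have "Em rm rp E m \<le> m - (m - 1) * xi0 rm rp"
    by (simp add: l_def contact_line_def algebra_simps)
  then have "(y0, m) \<in> Dset rm rp E"
    using y0 B0 B1 touch at_ends
    by (simp add: Dset_def l_def contact_line_def m_def)
  moreover have "SS \<rho> \<le> 1/2 * Ffun rm rp E y0 m"
    using SS_le_split_entropy[OF \<rho> y0] touch unfolding Ffun_eq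
    by (simp add: l_def m_def algebra_simps)
  ultimately show ?thesis by force
qed

subsection \<open>Two-step profiles attain the bound\<close>

definition two_step :: "real \<Rightarrow> real \<Rightarrow> real \<Rightarrow> real \<Rightarrow> real" where
  "two_step y \<alpha> \<beta> x = 1 - (if x < y then \<alpha> else \<beta>)"

lemma two_step_Mset:
  assumes "0 \<le> \<alpha>" "\<alpha> \<le> 1" "0 \<le> \<beta>" "\<beta> \<le> 1"
  shows "two_step y \<alpha> \<beta> \<in> Mset"
proof -
  have "two_step y \<alpha> \<beta> \<in> borel_measurable borel"
    unfolding two_step_def[abs_def] by measurable
  then show ?thesis
    using assms by (auto simp: Mset_def two_step_def intro: borel_measurable_lebesgue_on)
qed

lemma cumulative_two_step:
  assumes "0 \<le> \<alpha>" "\<alpha> \<le> 1" "0 \<le> \<beta>" "\<beta> \<le> 1" "-1 \<le> y" "y \<le> 1" "-1 \<le> z" "z \<le> 1"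
  shows "cumulative (two_step y \<alpha> \<beta>) z =
    (if z \<le> y then \<alpha> * (z + 1) else \<alpha> * (y + 1) + \<beta> * (z - y))"
proof -
  define v where "v x = (if x < y then \<alpha> else \<beta>)" for x :: real
  have B: "cumulative (two_step y \<alpha> \<beta>) z = integral {-1..z} v"
    by (simp add: cumulative_def two_step_def v_def[abs_def])
  have left: "integral {-1..z} v = \<alpha> * (z + 1)" if "-1 \<le> z" "z \<le> y" for z
  proof -
    have "integral {-1..z} v = integral {-1..z} (\<lambda>x. \<alpha>)"
      by (rule integral_spike[where S="{y}"]) (use that in \<open>auto simp: v_def\<close>)
    then show ?thesis using that by simp
  qed
  show ?thesis
  proof (cases "z \<le> y")
    case True
    then show ?thesis using left assms B by simp
  next
    case False
    have "v integrable_on {-1..z}"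
      using integrable_subinterval_real[OF Mset_integrals(1)[OF two_step_Mset[OF assms(1-4)]]]
        assms by (auto simp: two_step_def v_def[abs_def])
    with False have "integral {-1..z} v = integral {-1..y} v + integral {y..z} v"
      using Henstock_Kurzweil_Integration.integral_combine[OF assms(5), of z v] by simp
    also have "integral {y..z} v = integral {y..z} (\<lambda>x. \<beta>)"
      by (rule integral_cong) (auto simp: v_def)
    finally show ?thesis using left[of y] assms False B by simp
  qed
qed

lemma cumulative_two_step_le_line:
  assumes "0 \<le> \<alpha>" "\<alpha> \<le> 1" "0 \<le> \<beta>" "\<beta> \<le> 1" "-1 \<le> y" "y \<le> 1" "-1 \<le> z" "z \<le> 1"
    and "y \<noteq> -1 \<Longrightarrow> \<xi> \<le> \<alpha>" and "y \<noteq> 1 \<Longrightarrow> \<beta> \<le> \<xi>"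
  shows "cumulative (two_step y \<alpha> \<beta>) z \<le> \<alpha> * (y + 1) + \<xi> * (z - y)"
proof (cases "z \<le> y")
  case True
  then have "0 \<le> (\<alpha> - \<xi>) * (y - z)"
    using assms by (cases "y = -1") auto
  then show ?thesis
    using True cumulative_two_step[OF assms(1-8)] by (simp add: algebra_simps)
next
  case False
  then have "0 \<le> (\<xi> - \<beta>) * (z - y)"
    using assms by (cases "y = 1") auto
  then show ?thesis
    using False cumulative_two_step[OF assms(1-8)] by (simp add: algebra_simps)
qed

lemma SS_two_step:
  assumes "0 \<le> \<alpha>" "\<alpha> \<le> 1" "0 \<le> \<beta>" "\<beta> \<le> 1" "-1 \<le> y" "y \<le> 1"
  shows "SS (two_step y \<alpha> \<beta>) = - (1/2) * ((y + 1) * sfun \<alpha> + (1 - y) * sfun \<beta>)"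
proof -
  let ?h = "\<lambda>x. sfun (1 - two_step y \<alpha> \<beta> x)"
  have "integral {-1..1} ?h = integral {-1..y} ?h + integral {y..1} ?h"
    using Henstock_Kurzweil_Integration.integral_combine[OF assms(5,6)
        Mset_integrals(2)[OF two_step_Mset[OF assms(1-4)]]] by simp
  also have "integral {-1..y} ?h = integral {-1..y} (\<lambda>x. sfun \<alpha>)"
    by (rule integral_spike[where S="{y}"]) (auto simp: two_step_def)
  also have "integral {y..1} ?h = integral {y..1} (\<lambda>x. sfun \<beta>)"
    by (rule integral_cong) (auto simp: two_step_def)
  finally show ?thesis
    using Mset_integrals(3)[OF two_step_Mset[OF assms(1-4)]] assms by simp
qed

lemma Dset_attained:
  assumes params: "0 < rm" "rm < rp" "rp < 1" and mem: "(y, m) \<in> Dset rm rp E"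
  shows "\<exists>\<rho>\<in>Mset. Vplus rm rp \<rho> + SS \<rho> = E \<and> SS \<rho> = 1/2 * Ffun rm rp E y m"
proof -
  define \<xi> where "\<xi> = xi0 rm rp"
  define l where "l = contact_line rm rp E m"
  have y: "-1 \<le> y" "y \<le> 1" and at_ends: "\<xi> \<le> Em rm rp E m" "m - \<xi> \<le> Em rm rp E m"
    and ly: "0 \<le> l y" "l y \<le> y + 1" "0 \<le> m - l y" "m - l y \<le> 1 - y"
    using mem by (auto simp: Dset_def l_def contact_line_def \<xi>_def)
  define \<alpha> where "\<alpha> = l y / (y + 1)"
  define \<beta> where "\<beta> = (m - l y) / (1 - y)"
  have \<alpha>: "0 \<le> \<alpha>" "\<alpha> \<le> 1" "\<alpha> * (y + 1) = l y"
    using ly y by (auto simp: \<alpha>_def divide_le_eq_1)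
  have \<beta>: "0 \<le> \<beta>" "\<beta> \<le> 1" "\<beta> * (1 - y) = m - l y"
    using ly y by (auto simp: \<beta>_def divide_le_eq_1)
  define \<rho> where "\<rho> = two_step y \<alpha> \<beta>"
  have \<rho>: "\<rho> \<in> Mset"
    unfolding \<rho>_def using \<alpha> \<beta> by (intro two_step_Mset)
  have B: "cumulative \<rho> z = (if z \<le> y then \<alpha> * (z + 1) else \<alpha> * (y + 1) + \<beta> * (z - y))"
    if "-1 \<le> z" "z \<le> 1" for z
    unfolding \<rho>_def using cumulative_two_step \<alpha> \<beta> y that by blast
  have B1: "cumulative \<rho> 1 = m"
    using B[of 1] y \<alpha> \<beta> by (cases "y = 1") (auto simp: algebra_simps)
  have "\<xi> \<le> \<alpha>" if "y \<noteq> -1"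
  proof -
    have "\<xi> * (y + 1) \<le> l y"
      using at_ends(1) by (simp add: l_def contact_line_def \<xi>_def algebra_simps)
    then show ?thesis using y that by (simp add: \<alpha>_def le_divide_eq)
  qed
  moreover have "\<beta> \<le> \<xi>" if "y \<noteq> 1"
  proof -
    have "m - l y \<le> \<xi> * (1 - y)"
      using at_ends(2) by (simp add: l_def contact_line_def \<xi>_def algebra_simps)
    then show ?thesis using y that by (simp add: \<beta>_def divide_le_eq)
  qed
  moreover have "l z = \<alpha> * (y + 1) + \<xi> * (z - y)" for z
    using \<alpha>(3) by (simp add: l_def contact_line_def \<xi>_def algebra_simps)
  ultimately have "cumulative \<rho> z \<le> l z" if "-1 \<le> z" "z \<le> 1" for z
    unfolding \<rho>_def using \<alpha>(1,2) \<beta>(1,2) y that by (simp add: cumulative_two_step_le_line)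
  moreover have "cumulative \<rho> y = l y"
    using B[OF y] \<alpha>(3) by simp
  ultimately have "Vplus rm rp \<rho> + SS \<rho> = E"
    using Vplus_add_SS_eq_iff_contact[OF params \<rho>] y by (auto simp: B1 l_def)
  moreover have "SS \<rho> = 1/2 * Ffun rm rp E y m"
    unfolding \<rho>_def SS_two_step[OF \<alpha>(1,2) \<beta>(1,2) y] Ffun_eq l_def[symmetric]
    by (simp add: \<alpha>_def \<beta>_def algebra_simps)
  ultimately show ?thesis using \<rho> by blast
qed

lemma Sup_ereal_eq_SUP_if_cofinal:
  fixes f :: "'a \<Rightarrow> real"
  assumes "\<And>x. x \<in> X \<Longrightarrow> \<exists>p\<in>D. x \<le> f p" and "f ` D \<subseteq> X"
  shows "Sup (ereal ` X) = (SUP p\<in>D. ereal (f p))"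
proof (rule antisym)
  show "Sup (ereal ` X) \<le> (SUP p\<in>D. ereal (f p))"
  proof (rule Sup_least)
    fix z assume "z \<in> ereal ` X"
    then obtain x p where "z = ereal x" "p \<in> D" "x \<le> f p"
      using assms(1) by blast
    then show "z \<le> (SUP p\<in>D. ereal (f p))"
      by (auto intro: SUP_upper2)
  qed
  show "(SUP p\<in>D. ereal (f p)) \<le> Sup (ereal ` X)"
    by (rule SUP_least) (use assms(2) in \<open>auto intro: Sup_upper\<close>)
qed

theorem proposition4p1:
  fixes rm rp E :: real
  assumes "0 < rm" and "rm < rp" and "rp < 1" and "0 \<le> E"
  shows "Splus rm rp E = ereal (1/2) * (SUP p\<in>Dset rm rp E. ereal (Ffun rm rp E (fst p) (snd p)))"
proof -
  let ?D = "Dset rm rp E" and ?F = "\<lambda>p. Ffun rm rp E (fst p) (snd p)"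
  have "Splus rm rp E = (SUP p\<in>?D. ereal (1/2 * ?F p))"
    unfolding Splus_def
  proof (rule Sup_ereal_eq_SUP_if_cofinal)
    show "\<exists>p\<in>?D. x \<le> 1/2 * ?F p" if "x \<in> {SS \<rho> |\<rho>. \<rho> \<in> Mset \<and> Vplus rm rp \<rho> + SS \<rho> = E}" for x
      using that SS_le_Ffun_Dset[OF assms(1-3)] by blast
    show "(\<lambda>p. 1/2 * ?F p) ` ?D \<subseteq> {SS \<rho> |\<rho>. \<rho> \<in> Mset \<and> Vplus rm rp \<rho> + SS \<rho> = E}"
      using Dset_attained[OF assms(1-3)] by force
  qed
  also have "\<dots> = ereal (1/2) * (SUP p\<in>?D. ereal (?F p))"
    by (cases "?D = {}") (simp_all add: Sup_ereal_mult_left' bot_ereal_def)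
  finally show ?thesis .
qed

end
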